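(* Fix $\lambda,\mu,q>0$, $k\ge1$, $b\ge0$ and $\alpha\in(\underline\alpha,1]$, and let $J(\alpha,a,b)$, $\gamma$, $\theta$, $m_\alpha$ be as in the context. Then for $a\in(0,\infty)$, $\frac{\partial}{\partial a}J(\alpha,a,b)=\lambda\frac{\mu}{\alpha}e^{-\frac{\mu}{\alpha}a}\,\frac{-ak\big(q+q\frac{\mu}{\alpha}\theta(b,\alpha)\big)+c(\alpha)\gamma(b,\alpha)+\lambda k\frac{e^{-\frac{\mu}{\alpha}a}-1}{\mu/\alpha}}{\big(q+\frac{\mu q}{\alpha}\theta(b,\alpha)+\lambda e^{-\frac{\mu}{\alpha}a}\big)^2}.$ Consequently: (1) $\lim_{a\to0+}\frac{\partial}{\partial a}J(\alpha,a,b)>0$ and $\frac{\partial}{\partial a}J(\alpha,a,b)<0$ for all sufficiently large $a$, so neither $a=0$ nor $a=\infty$ maximises $a\mapsto J(\alpha,a,b)$; (2) there exists a unique $a_{k,b,\alpha}\in(0,\infty)$ with $\frac{\partial}{\partial a}J(\alpha,a_{k,b,\alpha},b)=0$, equivalently $-a_{k,b,\alpha}k\big(q+q\frac{\mu}{\alpha}\theta(b,\alpha)\big)+c(\alpha)\gamma(b,\alpha)+\lambda k\frac{e^{-\frac{\mu}{\alpha}a_{k,b,\alpha}}-1}{\mu/\alpha}=0,$ and at this point $J(\alpha,a_{k,b,\alpha},b)=k\,a_{k,b,\alpha}$.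
   Context: Let $c(\alpha)=c-(1-\alpha)(1+\eta_2)\lambda\mu$ with $c>0$, $\eta_2>0$, where $\underline\alpha$ is the zero of $c(\cdot)$, so that $c(\alpha)>0$ for $\alpha>\underline\alpha$. For retention $\alpha$, let $\rho_-(\alpha)\le0\le\Phi_q(\alpha)$ be the roots of $\alpha c(\alpha)\theta^2+(c(\alpha)\mu-\alpha\lambda-\alpha q)\theta-\mu q=0$. Define $\gamma(x,\alpha)=\frac{\Phi_q(\alpha)-\rho_-(\alpha)}{\Phi_q(\alpha)e^{\Phi_q(\alpha)x}-\rho_-(\alpha)e^{\rho_-(\alpha)x}}$, $\theta(x,\alpha)=\frac{e^{\Phi_q(\alpha)x}-e^{\rho_-(\alpha)x}}{\Phi_q(\alpha)e^{\Phi_q(\alpha)x}-\rho_-(\alpha)e^{\rho_-(\alpha)x}}$, $m_\alpha(a)=\frac{1-e^{-\frac{\mu}{\alpha}a}(\frac{\mu}{\alpha}a+1)}{\mu/\alpha}$, and $J(\alpha,a,b)=\frac{c(\alpha)\gamma(b,\alpha)-\lambda k\,m_\alpha(a)}{q+\frac{\mu q}{\alpha}\theta(b,\alpha)+\lambda e^{-\frac{\mu}{\alpha}a}}$ (the value at initial reserve $0$ of the policy with retention $\alpha$, injections up to severity $a$ and dividend barrier $b$, for exponential claims with rate $\mu$). *)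

theory Defs
  imports "HOL-Analysis.Analysis"
begin

text \<open>Parameters: c, eta2 (safety loading), lam (claim intensity), mu (exponential
claim rate), q (discount rate), k (injection cost factor).\<close>

definition c_ret :: "real \<Rightarrow> real \<Rightarrow> real \<Rightarrow> real \<Rightarrow> real \<Rightarrow> real" where
  "c_ret c eta2 lam mu \<alpha> = c - (1 - \<alpha>) * (1 + eta2) * lam * mu"

text \<open>The zero of the affine function c(.) (lower bound for admissible retention).\<close>
definition alpha_low :: "real \<Rightarrow> real \<Rightarrow> real \<Rightarrow> real \<Rightarrow> real" where
  "alpha_low c eta2 lam mu = 1 - c / ((1 + eta2) * lam * mu)"

definition quadA :: "real \<Rightarrow> real \<Rightarrow> real \<Rightarrow> real \<Rightarrow> real \<Rightarrow> real" where
  "quadA c eta2 lam mu \<alpha> = \<alpha> * c_ret c eta2 lam mu \<alpha>"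

definition quadB :: "real \<Rightarrow> real \<Rightarrow> real \<Rightarrow> real \<Rightarrow> real \<Rightarrow> real \<Rightarrow> real" where
  "quadB c eta2 lam mu q \<alpha> = c_ret c eta2 lam mu \<alpha> * mu - \<alpha> * lam - \<alpha> * q"

definition quadC :: "real \<Rightarrow> real \<Rightarrow> real" where
  "quadC mu q = - mu * q"

text \<open>The nonnegative root Phi_q(alpha) and the nonpositive root rho_-(alpha)
  (roots are real and of opposite sign since A > 0 > C).\<close>
definition Phi_q :: "real \<Rightarrow> real \<Rightarrow> real \<Rightarrow> real \<Rightarrow> real \<Rightarrow> real \<Rightarrow> real" where
  "Phi_q c eta2 lam mu q \<alpha> =
     (- quadB c eta2 lam mu q \<alpha> + sqrt ((quadB c eta2 lam mu q \<alpha>)\<^sup>2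
        - 4 * quadA c eta2 lam mu \<alpha> * quadC mu q)) / (2 * quadA c eta2 lam mu \<alpha>)"

definition rho_m :: "real \<Rightarrow> real \<Rightarrow> real \<Rightarrow> real \<Rightarrow> real \<Rightarrow> real \<Rightarrow> real" where
  "rho_m c eta2 lam mu q \<alpha> =
     (- quadB c eta2 lam mu q \<alpha> - sqrt ((quadB c eta2 lam mu q \<alpha>)\<^sup>2
        - 4 * quadA c eta2 lam mu \<alpha> * quadC mu q)) / (2 * quadA c eta2 lam mu \<alpha>)"

definition gam :: "real \<Rightarrow> real \<Rightarrow> real \<Rightarrow> real \<Rightarrow> real \<Rightarrow> real \<Rightarrow> real \<Rightarrow> real" where
  "gam c eta2 lam mu q x \<alpha> =
     (let P = Phi_q c eta2 lam mu q \<alpha>; R = rho_m c eta2 lam mu q \<alpha>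
      in (P - R) / (P * exp (P * x) - R * exp (R * x)))"

definition thet :: "real \<Rightarrow> real \<Rightarrow> real \<Rightarrow> real \<Rightarrow> real \<Rightarrow> real \<Rightarrow> real \<Rightarrow> real" where
  "thet c eta2 lam mu q x \<alpha> =
     (let P = Phi_q c eta2 lam mu q \<alpha>; R = rho_m c eta2 lam mu q \<alpha>
      in (exp (P * x) - exp (R * x)) / (P * exp (P * x) - R * exp (R * x)))"

definition m_ret :: "real \<Rightarrow> real \<Rightarrow> real \<Rightarrow> real" where
  "m_ret mu \<alpha> a = (1 - exp (- (mu / \<alpha>) * a) * ((mu / \<alpha>) * a + 1)) / (mu / \<alpha>)"

definition J :: "real \<Rightarrow> real \<Rightarrow> real \<Rightarrow> real \<Rightarrow> real \<Rightarrow> real \<Rightarrow> real \<Rightarrow> real \<Rightarrow> real \<Rightarrow> real" where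
  "J c eta2 lam mu q k \<alpha> a b =
     (c_ret c eta2 lam mu \<alpha> * gam c eta2 lam mu q b \<alpha> - lam * k * m_ret mu \<alpha> a) /
     (q + (mu * q / \<alpha>) * thet c eta2 lam mu q b \<alpha> + lam * exp (- (mu / \<alpha>) * a))"

definition Jnum :: "real \<Rightarrow> real \<Rightarrow> real \<Rightarrow> real \<Rightarrow> real \<Rightarrow> real \<Rightarrow> real \<Rightarrow> real \<Rightarrow> real \<Rightarrow> real" where
  "Jnum c eta2 lam mu q k \<alpha> a b =
     - a * k * (q + q * (mu / \<alpha>) * thet c eta2 lam mu q b \<alpha>)
     + c_ret c eta2 lam mu \<alpha> * gam c eta2 lam mu q b \<alpha>
     + lam * k * (exp (- (mu / \<alpha>) * a) - 1) / (mu / \<alpha>)"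

definition dJ :: "real \<Rightarrow> real \<Rightarrow> real \<Rightarrow> real \<Rightarrow> real \<Rightarrow> real \<Rightarrow> real \<Rightarrow> real \<Rightarrow> real \<Rightarrow> real" where
  "dJ c eta2 lam mu q k \<alpha> a b =
     lam * (mu / \<alpha>) * exp (- (mu / \<alpha>) * a) * Jnum c eta2 lam mu q k \<alpha> a b /
     (q + (mu * q / \<alpha>) * thet c eta2 lam mu q b \<alpha> + lam * exp (- (mu / \<alpha>) * a))\<^sup>2"

end

theory Submission
  imports Defs
begin

text \<open>For fixed retention \<open>\<alpha>\<close> and barrier \<open>b\<close>, write \<open>\<beta> = \<mu>/\<alpha>\<close>. Then
  \<open>J(a) = (C - \<lambda> k m(a)) / (Q + \<lambda> exp(-\<beta>a))\<close> with constants \<open>C = c(\<alpha>) \<gamma>(b,\<alpha>) > 0\<close>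
  and \<open>Q = q + q \<beta> \<theta>(b,\<alpha>) > 0\<close>, the signs coming from \<open>\<rho>\<^sub>- < 0 < \<Phi>\<^sub>q\<close>.
  By the quotient rule \<open>J'(a)\<close> is a positive factor times \<open>N(a)\<close>, and
  \<open>N(0) = C > 0\<close>, \<open>N'(a) = -k (Q + \<lambda> exp(-\<beta>a)) < 0\<close>: so \<open>N\<close> has exactly one zero,
  which is positive, and \<open>J\<close> increases before it and decreases after it. At the zero,
  \<open>C - \<lambda> k m(a) = k a (Q + \<lambda> exp(-\<beta>a))\<close>, i.e. \<open>J(a) = k a\<close>.\<close>

locale injection_level =
  fixes C Q lam k \<beta> :: real
  assumes C_pos: "C > 0" and Q_pos: "Q > 0" and lam_pos: "lam > 0"
    and k_pos: "k > 0" and beta_pos: "\<beta> > 0"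
begin

definition denom :: "real \<Rightarrow> real" where
  "denom a = Q + lam * exp (- \<beta> * a)"

definition value_fn :: "real \<Rightarrow> real" where
  "value_fn a = (C - lam * k * ((1 - exp (- \<beta> * a) * (\<beta> * a + 1)) / \<beta>)) / denom a"

definition numer :: "real \<Rightarrow> real" where
  "numer a = - a * k * Q + C + lam * k * (exp (- \<beta> * a) - 1) / \<beta>"

definition weight :: "real \<Rightarrow> real" where
  "weight a = lam * \<beta> * exp (- \<beta> * a) / (denom a)\<^sup>2"

definition value_deriv :: "real \<Rightarrow> real" where
  "value_deriv a = weight a * numer a"

lemma denom_pos: "denom a > 0"
  using Q_pos lam_pos by (simp add: denom_def add_pos_pos)

lemma has_real_derivative_value_fn: "(value_fn has_real_derivative value_deriv a) (at a)"
proof -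
  have "(value_fn has_real_derivative
      (- (lam * k * ((- (exp (- \<beta> * a) * (- \<beta>)) * (\<beta> * a + 1) - exp (- \<beta> * a) * \<beta>) / \<beta>))
          * denom a
        - (C - lam * k * ((1 - exp (- \<beta> * a) * (\<beta> * a + 1)) / \<beta>))
          * (lam * (exp (- \<beta> * a) * (- \<beta>)))) / (denom a)\<^sup>2) (at a)" (is "(_ has_real_derivative ?D) _")
    using denom_pos[of a] beta_pos unfolding value_fn_def[abs_def] denom_def
    by (auto intro!: derivative_eq_intros simp: power2_eq_square)
  moreover have "?D = value_deriv a"
    using beta_pos by (simp add: value_deriv_def weight_def numer_def denom_def field_simps)
  ultimately show ?thesis by simp
qed

lemma has_real_derivative_numer:
  "(numer has_real_derivative - k * Q - lam * k * exp (- \<beta> * a)) (at a)"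
  unfolding numer_def[abs_def] using beta_pos
  by (auto intro!: derivative_eq_intros simp: field_simps)

lemma isCont_numer: "isCont numer a"
  using has_real_derivative_numer by (rule DERIV_isCont)

lemma numer_strict_decreasing: "x < y \<Longrightarrow> numer y < numer x"
proof (erule DERIV_neg_imp_decreasing)
  fix t
  have "k * Q > 0" "lam * k * exp (- \<beta> * t) > 0"
    using k_pos Q_pos lam_pos by simp_all
  then have "- k * Q - lam * k * exp (- \<beta> * t) < 0" by linarith
  then show "\<exists>y. (numer has_real_derivative y) (at t) \<and> y < 0"
    using has_real_derivative_numer by blast
qed

lemma numer_0: "numer 0 = C"
  by (simp add: numer_def)

text \<open>The root lies in \<open>[0, C/(kQ) + 1]\<close>, since the exponential term of \<open>numer\<close> is
  nonpositive for \<open>a \<ge> 0\<close>.\<close>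
lemma numer_has_positive_root: "\<exists>a>0. numer a = 0"
proof -
  define a1 where "a1 = C / (k * Q) + 1"
  have kQ: "k * Q > 0" using k_pos Q_pos by simp
  have a1_pos: "a1 > 0" using C_pos kQ by (simp add: a1_def add_pos_pos)
  have "lam * k * (exp (- \<beta> * a1) - 1) / \<beta> \<le> 0"
    using lam_pos k_pos beta_pos a1_pos
    by (intro divide_nonpos_pos mult_nonneg_nonpos) auto
  moreover have "a1 * k * Q = C + k * Q" using k_pos Q_pos by (simp add: a1_def field_simps)
  ultimately have "numer a1 < 0" using kQ unfolding numer_def by linarith
  then have "\<exists>a0. 0 \<le> a0 \<and> a0 \<le> a1 \<and> numer a0 = 0"
    by (intro IVT2) (use numer_0 C_pos a1_pos isCont_numer in auto)
  then obtain a0 where a0: "0 \<le> a0" "numer a0 = 0"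
    by blast
  moreover have "a0 \<noteq> 0" using a0 numer_0 C_pos by auto
  ultimately have "a0 > 0" by simp
  with a0 show ?thesis by blast
qed

lemma weight_pos: "weight a > 0"
  using lam_pos beta_pos denom_pos[of a] by (simp add: weight_def)

lemma value_deriv_pos_iff: "value_deriv a > 0 \<longleftrightarrow> numer a > 0"
  using weight_pos[of a] by (simp add: value_deriv_def zero_less_mult_iff)

lemma value_deriv_neg_iff: "value_deriv a < 0 \<longleftrightarrow> numer a < 0"
  using weight_pos[of a] by (simp add: value_deriv_def mult_less_0_iff)

lemma value_deriv_eq_0_iff: "value_deriv a = 0 \<longleftrightarrow> numer a = 0"
  using weight_pos[of a] by (simp add: value_deriv_def)

lemma isCont_value_deriv: "isCont value_deriv a"
  using denom_pos[of a] isCont_numer[of a] unfolding value_deriv_def[abs_def] weight_def denom_def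
  by (intro continuous_intros) auto

lemma value_fn_at_critical_level: "value_deriv a = 0 \<Longrightarrow> value_fn a = k * a"
proof -
  assume "value_deriv a = 0"
  then have "C = a * k * Q - lam * k * (exp (- \<beta> * a) - 1) / \<beta>"
    by (simp add: value_deriv_eq_0_iff numer_def)
  then have "C - lam * k * ((1 - exp (- \<beta> * a) * (\<beta> * a + 1)) / \<beta>) = k * a * denom a"
    using beta_pos by (simp add: denom_def field_simps)
  then show ?thesis using denom_pos[of a] by (simp add: value_fn_def)
qed

definition optimal_level :: real where
  "optimal_level = (THE a. numer a = 0)"

lemma optimal_level_eqI: "numer a = 0 \<Longrightarrow> optimal_level = a"
  unfolding optimal_level_def
proof (rule the_equality)
  fix x assume "numer x = 0" "numer a = 0"
  then show "x = a"
    using numer_strict_decreasing[of x a] numer_strict_decreasing[of a x]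
    by (cases x a rule: linorder_cases) auto
qed

lemma optimal_level_pos: "optimal_level > 0"
  and numer_optimal_level: "numer optimal_level = 0"
proof -
  obtain a0 where pos: "a0 > 0" and root: "numer a0 = 0"
    using numer_has_positive_root by blast
  have "optimal_level = a0" using root by (rule optimal_level_eqI)
  then show "optimal_level > 0" "numer optimal_level = 0"
    using pos root by simp_all
qed

lemma value_deriv_eq_0_iff_optimal: "value_deriv a = 0 \<longleftrightarrow> a = optimal_level"
  using optimal_level_eqI numer_optimal_level value_deriv_eq_0_iff by metis

lemma value_deriv_pos_below:
  assumes "a < optimal_level" shows "value_deriv a > 0"
  using numer_strict_decreasing[OF assms] numer_optimal_level by (simp add: value_deriv_pos_iff)

lemma value_deriv_neg_above:
  assumes "optimal_level < a" shows "value_deriv a < 0"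
  using numer_strict_decreasing[OF assms] numer_optimal_level by (simp add: value_deriv_neg_iff)

lemma value_deriv_at_right_0: "\<exists>L>0. (value_deriv \<longlongrightarrow> L) (at_right 0)"
proof (intro exI conjI)
  show "(value_deriv \<longlongrightarrow> value_deriv 0) (at_right 0)"
    using isCont_value_deriv[of 0] unfolding isCont_def
    by (rule tendsto_mono[OF at_within_le_at])
  show "value_deriv 0 > 0"
    using C_pos by (simp add: value_deriv_pos_iff numer_0)
qed

lemma eventually_value_deriv_neg: "\<forall>\<^sub>F a in at_top. value_deriv a < 0"
  using eventually_gt_at_top[of optimal_level] by eventually_elim (rule value_deriv_neg_above)

lemma value_fn_beats_zero_level: "\<exists>a>0. value_fn a > value_fn 0"
proof (intro exI conjI)
  show "0 < optimal_level / 2" using optimal_level_pos by simp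
  then show "value_fn 0 < value_fn (optimal_level / 2)"
  proof (rule DERIV_pos_imp_increasing)
    fix x assume "0 \<le> x" "x \<le> optimal_level / 2"
    then have "x < optimal_level" using optimal_level_pos by simp
    then show "\<exists>y. (value_fn has_real_derivative y) (at x) \<and> y > 0"
      using has_real_derivative_value_fn value_deriv_pos_below by blast
  qed
qed

lemma value_fn_beats_limit_at_top:
  assumes "(value_fn \<longlongrightarrow> L) at_top"
  shows "\<exists>a>0. value_fn a > L"
proof (intro exI conjI)
  show "0 < optimal_level + 1" using optimal_level_pos by simp
  show "L < value_fn (optimal_level + 1)"
    using assms
  proof (rule DERIV_neg_imp_decreasing_at_top[rotated])
    fix x assume "optimal_level + 1 \<le> x"
    then have "optimal_level < x" by simp
    then show "\<exists>y. (value_fn has_real_derivative y) (at x) \<and> y < 0"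
      using has_real_derivative_value_fn value_deriv_neg_above by blast
  qed
qed

lemma ex1_critical_level: "\<exists>!a. a > 0 \<and> value_deriv a = 0"
  using optimal_level_pos by (auto simp: value_deriv_eq_0_iff_optimal)

end

lemma c_ret_pos:
  assumes "alpha_low c eta2 lam mu < \<alpha>" and "(1 + eta2) * lam * mu > 0"
  shows "c_ret c eta2 lam mu \<alpha> > 0"
proof -
  have "(1 - \<alpha>) * ((1 + eta2) * lam * mu) < c"
    using assms by (simp add: alpha_low_def field_simps)
  then show ?thesis by (simp add: c_ret_def mult.assoc)
qed

lemma abs_quadB_less_sqrt_discriminant:
  assumes "quadA c eta2 lam mu \<alpha> > 0" and "mu > 0" and "q > 0"
  shows "\<bar>quadB c eta2 lam mu q \<alpha>\<bar>
    < sqrt ((quadB c eta2 lam mu q \<alpha>)\<^sup>2 - 4 * quadA c eta2 lam mu \<alpha> * quadC mu q)"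
proof (rule real_less_rsqrt)
  show "\<bar>quadB c eta2 lam mu q \<alpha>\<bar>\<^sup>2
      < (quadB c eta2 lam mu q \<alpha>)\<^sup>2 - 4 * quadA c eta2 lam mu \<alpha> * quadC mu q"
    using assms by (simp add: quadC_def)
qed

lemma Phi_q_pos:
  assumes "quadA c eta2 lam mu \<alpha> > 0" and "mu > 0" and "q > 0"
  shows "Phi_q c eta2 lam mu q \<alpha> > 0"
  using abs_quadB_less_sqrt_discriminant[OF assms] assms(1)
  unfolding Phi_q_def by (intro divide_pos_pos) auto

lemma rho_m_neg:
  assumes "quadA c eta2 lam mu \<alpha> > 0" and "mu > 0" and "q > 0"
  shows "rho_m c eta2 lam mu q \<alpha> < 0"
  using abs_quadB_less_sqrt_discriminant[OF assms] assms(1)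
  unfolding rho_m_def by (intro divide_neg_pos) auto

lemma gam_thet_denominator_pos:
  fixes P R x :: real
  assumes "P > 0" and "R < 0"
  shows "P * exp (P * x) - R * exp (R * x) > 0"
proof -
  have "P * exp (P * x) > 0" "R * exp (R * x) < 0"
    using assms by (simp_all add: mult_neg_pos)
  then show ?thesis by linarith
qed

lemma gam_pos:
  assumes "Phi_q c eta2 lam mu q \<alpha> > 0" and "rho_m c eta2 lam mu q \<alpha> < 0"
  shows "gam c eta2 lam mu q x \<alpha> > 0"
  unfolding gam_def Let_def
  using assms gam_thet_denominator_pos[OF assms, of x] by (simp add: zero_less_divide_iff)

lemma thet_nonneg:
  assumes "Phi_q c eta2 lam mu q \<alpha> > 0" and "rho_m c eta2 lam mu q \<alpha> < 0" and "x \<ge> 0"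
  shows "thet c eta2 lam mu q x \<alpha> \<ge> 0"
proof -
  have "exp (rho_m c eta2 lam mu q \<alpha> * x) \<le> exp (Phi_q c eta2 lam mu q \<alpha> * x)"
    using assms by (simp add: mult_right_mono)
  then show ?thesis
    unfolding thet_def Let_def
    using gam_thet_denominator_pos[OF assms(1,2), of x] by (simp add: zero_le_divide_iff)
qed

theorem lemma4p3:
  fixes c eta2 lam mu q k b \<alpha> :: real
  assumes "c > 0" and "eta2 > 0" and "lam > 0" and "mu > 0" and "q > 0"
    and "k \<ge> 1" and "b \<ge> 0"
    and "alpha_low c eta2 lam mu < \<alpha>" and "0 < \<alpha>" and "\<alpha> \<le> 1"
  shows
    "(\<forall>a>0. ((\<lambda>x. J c eta2 lam mu q k \<alpha> x b) has_real_derivative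
               dJ c eta2 lam mu q k \<alpha> a b) (at a))
     \<and> (\<exists>L>0. ((\<lambda>a. dJ c eta2 lam mu q k \<alpha> a b) \<longlongrightarrow> L) (at_right 0))
     \<and> (\<forall>\<^sub>F a in at_top. dJ c eta2 lam mu q k \<alpha> a b < 0)
     \<and> (\<exists>a>0. J c eta2 lam mu q k \<alpha> a b > J c eta2 lam mu q k \<alpha> 0 b)
     \<and> (\<forall>L. ((\<lambda>a. J c eta2 lam mu q k \<alpha> a b) \<longlongrightarrow> L) at_top
             \<longrightarrow> (\<exists>a>0. J c eta2 lam mu q k \<alpha> a b > L))
     \<and> (\<exists>!a. a > 0 \<and> dJ c eta2 lam mu q k \<alpha> a b = 0)
     \<and> (\<forall>a>0. dJ c eta2 lam mu q k \<alpha> a b = 0 \<longleftrightarrow> Jnum c eta2 lam mu q k \<alpha> a b = 0)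
     \<and> (\<forall>a>0. dJ c eta2 lam mu q k \<alpha> a b = 0 \<longrightarrow> J c eta2 lam mu q k \<alpha> a b = k * a)"
proof -
  have c_ret: "c_ret c eta2 lam mu \<alpha> > 0"
    using assms by (intro c_ret_pos) simp_all
  then have "quadA c eta2 lam mu \<alpha> > 0"
    using assms by (simp add: quadA_def)
  then have roots: "Phi_q c eta2 lam mu q \<alpha> > 0" "rho_m c eta2 lam mu q \<alpha> < 0"
    using assms Phi_q_pos rho_m_neg by auto
  have C_pos: "c_ret c eta2 lam mu \<alpha> * gam c eta2 lam mu q b \<alpha> > 0"
    using c_ret gam_pos[OF roots] by simp
  have Q_pos: "q + mu * q / \<alpha> * thet c eta2 lam mu q b \<alpha> > 0"
    using assms thet_nonneg[OF roots \<open>b \<ge> 0\<close>] by (simp add: add_pos_nonneg)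
  interpret I: injection_level "c_ret c eta2 lam mu \<alpha> * gam c eta2 lam mu q b \<alpha>"
    "q + mu * q / \<alpha> * thet c eta2 lam mu q b \<alpha>" lam k "mu / \<alpha>"
    using assms C_pos Q_pos by unfold_locales simp_all
  have J_eq: "J c eta2 lam mu q k \<alpha> a b = I.value_fn a" for a
    unfolding J_def I.value_fn_def I.denom_def m_ret_def by (simp only: add.assoc)
  have Jnum_eq: "Jnum c eta2 lam mu q k \<alpha> a b = I.numer a" for a
    unfolding Jnum_def I.numer_def by simp
  have dJ_eq: "dJ c eta2 lam mu q k \<alpha> a b = I.value_deriv a" for a
    unfolding dJ_def I.value_deriv_def I.weight_def Jnum_eq I.denom_def by (simp add: add.assoc)
  show ?thesis
    unfolding J_eq dJ_eq Jnum_eq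
    by (intro conjI allI impI I.has_real_derivative_value_fn I.value_deriv_at_right_0
        I.eventually_value_deriv_neg I.value_fn_beats_zero_level I.value_fn_beats_limit_at_top
        I.ex1_critical_level I.value_deriv_eq_0_iff I.value_fn_at_critical_level)
qed

end
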